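(* Let $q\ge2$ be fixed and let $r^*(n)$ denote the minimum redundancy of a $2$-read $(n,3)_q$-code in $\Sigma_q^n$ (equivalently, of a classical $(n,2;\mathcal{I}_1)_q$-reconstruction code). Then, as $n\to\infty$, $$\log_q\log_q n-o(1)\le r^*(n)\le \log_q\log_q n+1-\log_q2+o(1).$$
   Context: $\Sigma_q=\{0,\dots,q-1\}$. For $\boldsymbol{x}\in\Sigma_q^n$, $x[i]$ is its $i$-th entry, with $x[i]=0$ for $i\notin[1,n]$. $\mathcal{R}(\boldsymbol{x})$ is the vector of length $n+1$ whose $i$-th entry is the multiset $\{\{x[i-1],x[i]\}\}$. $\mathcal{C}\subseteq\Sigma_q^n$ is a $2$-read $(n,d)_q$-code if $d_H(\mathcal{R}(\boldsymbol{x}),\mathcal{R}(\boldsymbol{y}))\ge d$ for all distinct $\boldsymbol{x},\boldsymbol{y}\in\mathcal{C}$ ($d_H$ = Hamming distance). $\mathcal{I}_1(\boldsymbol{x})$ is the set of length-$(n+1)$ sequences obtained from $\boldsymbol{x}$ by inserting exactly one symbol; $\mathcal{C}$ is a classical $(n,2;\mathcal{I}_1)_q$-reconstruction code if $|\mathcal{I}_1(\boldsymbol{x})\cap\mathcal{I}_1(\boldsymbol{y})|\le1$ for all distinct $\boldsymbol{x},\boldsymbol{y}\in\mathcal{C}$. Redundancy: $r(\mathcal{C})=n-\log_q|\mathcal{C}|$. *)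

theory Defs
  imports Complex_Main "HOL-Library.Multiset"
begin

definition Sigma_n :: "nat \<Rightarrow> nat \<Rightarrow> nat list set" where
  "Sigma_n q n = {xs. length xs = n \<and> set xs \<subseteq> {..<q}}"

text \<open>x[i] with 1-based indexing, and x[i] = 0 outside [1,n].\<close>
definition entry :: "nat list \<Rightarrow> nat \<Rightarrow> nat" where
  "entry xs i = (if 1 \<le> i \<and> i \<le> length xs then xs ! (i - 1) else 0)"

text \<open>The 2-read vector R(x): its i-th entry (i = 1..n+1) is the multiset {x[i-1], x[i]}.\<close>
definition read2 :: "nat list \<Rightarrow> nat \<Rightarrow> nat multiset" where
  "read2 xs i = {# entry xs (i - 1), entry xs i #}"

definition read_dist :: "nat \<Rightarrow> nat list \<Rightarrow> nat list \<Rightarrow> nat" where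
  "read_dist n xs ys = card {i \<in> {1..n+1}. read2 xs i \<noteq> read2 ys i}"

definition two_read_code :: "nat \<Rightarrow> nat \<Rightarrow> nat \<Rightarrow> nat list set \<Rightarrow> bool" where
  "two_read_code q n d C \<longleftrightarrow> C \<subseteq> Sigma_n q n \<and>
     (\<forall>x\<in>C. \<forall>y\<in>C. x \<noteq> y \<longrightarrow> read_dist n x y \<ge> d)"

definition redundancy :: "nat \<Rightarrow> nat \<Rightarrow> nat list set \<Rightarrow> real" where
  "redundancy q n C = real n - log (real q) (real (card C))"

definition r_star :: "nat \<Rightarrow> nat \<Rightarrow> real" where
  "r_star q n = Min {redundancy q n C | C. two_read_code q n 3 C \<and> C \<noteq> {}}"

end

(*
  Two distinct words whose 2-reads are at Hamming distance at most two differ by a swap segment: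
  they agree outside an interval [u, v], on which one reads abab... and the other baba....

  Lower bound: cut words into n div l blocks of length l. The l + 1 alternating words of length l
  with at most one phase flip pairwise differ by a swap segment, so a code contains at most a
  fraction 1/(l+1) of the words having such a block somewhere, while the words having none form a
  fraction at most (1 - (l+1)/q^l)^(n div l). With L = log_q n and l = floor (L - 2 log_q L) the
  first fraction is about 1/L and the second at most exp (-L^2/2).

  Upper bound: let P be coprime to 1, ..., q - 1. Among the words without an alternating run of
  length 2P, the sum of the digits mod q and the sum of t x[t] mod P separate any two words at read
  distance at most two: a swap segment of odd length changes the first by some d with 0 < |d| < q,
  one of length 2j changes the second by j d, forcing P dvd j and hence a run of length at least 2P.
  By pigeonhole one of the q P residue classes is a code of size at least
  (q^n - n q^(n+2-2P)) / (q P), and P close to L/2 + log_q L gives the redundancy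
  log_q L + 1 - log_q 2 + o(1).
*)

theory Submission
  imports Defs "HOL-Real_Asymp.Real_Asymp"
begin

subsection \<open>Codes and their redundancy\<close>

lemma Sigma_n_eq_lists: "Sigma_n q n = {xs. set xs \<subseteq> {..<q} \<and> length xs = n}"
  by (auto simp: Sigma_n_def)

lemma finite_Sigma_n: "finite (Sigma_n q n)"
  unfolding Sigma_n_eq_lists by (rule finite_lists_length_eq) simp

lemma card_Sigma_n: "card (Sigma_n q n) = q ^ n"
  unfolding Sigma_n_eq_lists by (subst card_lists_length_eq) auto

lemma finite_two_read_code: "two_read_code q n d C \<Longrightarrow> finite C"
  unfolding two_read_code_def using finite_Sigma_n finite_subset by blast

lemma finite_redundancies:
  "finite {redundancy q n C | C. two_read_code q n 3 C \<and> C \<noteq> {}}"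
proof -
  have "{redundancy q n C | C. two_read_code q n 3 C \<and> C \<noteq> {}}
        \<subseteq> redundancy q n ` Pow (Sigma_n q n)"
    by (auto simp: two_read_code_def)
  then show ?thesis
    using finite_Sigma_n finite_subset by blast
qed

lemma r_star_le_redundancy:
  assumes "two_read_code q n 3 C" "C \<noteq> {}"
  shows "r_star q n \<le> redundancy q n C"
  unfolding r_star_def using assms finite_redundancies by (intro Min_le) auto

lemma le_r_star:
  assumes "q \<ge> 1"
    and "\<And>C. two_read_code q n 3 C \<Longrightarrow> C \<noteq> {} \<Longrightarrow> b \<le> redundancy q n C"
  shows "b \<le> r_star q n"
proof -
  have "two_read_code q n 3 {replicate n 0}"
    using assms(1) by (auto simp: two_read_code_def Sigma_n_def)
  then have "{redundancy q n C | C. two_read_code q n 3 C \<and> C \<noteq> {}} \<noteq> {}"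
    by blast
  then show ?thesis
    unfolding r_star_def using finite_redundancies assms(2) by (subst Min_ge_iff) auto
qed

lemma le_r_star_if_card_le:
  assumes q: "q \<ge> 2" and "\<beta> > 0"
    and card_le: "\<And>C. two_read_code q n 3 C \<Longrightarrow> C \<noteq> {} \<Longrightarrow> real (card C) \<le> real q ^ n * \<beta>"
  shows "- log q \<beta> \<le> r_star q n"
proof (rule le_r_star)
  fix C assume code: "two_read_code q n 3 C" and "C \<noteq> {}"
  then have "real (card C) > 0"
    using finite_two_read_code by (simp add: card_gt_0_iff)
  then have "log q (real (card C)) \<le> log q (real q ^ n * \<beta>)"
    using card_le[OF code \<open>C \<noteq> {}\<close>] q by (subst log_le_cancel_iff) auto
  also have "\<dots> = real n + log q \<beta>"
    using q \<open>\<beta> > 0\<close> by (simp add: log_mult log_nat_power)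
  finally show "- log q \<beta> \<le> redundancy q n C"
    unfolding redundancy_def by linarith
qed (use q in simp)

lemma r_star_le_if_card_ge:
  assumes q: "q \<ge> 2" and code: "two_read_code q n 3 C" and "\<gamma> > 0"
    and card_ge: "real q ^ n * \<gamma> \<le> real (card C)"
  shows "r_star q n \<le> - log q \<gamma>"
proof -
  have pos: "real q ^ n * \<gamma> > 0"
    using q \<open>\<gamma> > 0\<close> by simp
  then have "C \<noteq> {}"
    using card_ge by auto
  have "real n + log q \<gamma> = log q (real q ^ n * \<gamma>)"
    using q \<open>\<gamma> > 0\<close> by (simp add: log_mult log_nat_power)
  also have "\<dots> \<le> log q (real (card C))"
    using card_ge pos q by (subst log_le_cancel_iff) auto
  finally have "redundancy q n C \<le> - log q \<gamma>"
    unfolding redundancy_def by linarith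
  then show ?thesis
    using r_star_le_redundancy[OF code \<open>C \<noteq> {}\<close>] by linarith
qed

subsection \<open>Words at read distance at most two\<close>

lemma entry_0 [simp]: "entry x 0 = 0"
  by (simp add: entry_def)

lemma entry_beyond_length: "length x < t \<Longrightarrow> entry x t = 0"
  by (simp add: entry_def)

lemma entry_less:
  assumes "x \<in> Sigma_n q n" "q \<ge> 1"
  shows "entry x t < q"
proof (cases "1 \<le> t \<and> t \<le> length x")
  case True
  then have "x ! (t - 1) \<in> set x"
    by (intro nth_mem) auto
  then show ?thesis
    using assms True by (auto simp: entry_def Sigma_n_def)
qed (use assms in \<open>auto simp: entry_def\<close>)

lemma entry_eqI:
  assumes "length x = length y" "\<And>t. entry x t = entry y t"
  shows "x = y"
proof (rule nth_equalityI)
  fix i assume "i < length x"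
  then show "x ! i = y ! i"
    using assms(2)[of "Suc i"] assms(1) by (simp add: entry_def)
qed (fact assms(1))

lemma entry_append_outside:
  assumes "length w = length w'" "t \<le> length pre \<or> length pre + length w < t"
  shows "entry (pre @ w @ suf) t = entry (pre @ w' @ suf) t"
  using assms by (auto simp: entry_def nth_append)

lemma entry_append_inside:
  assumes "length pre < t" "t \<le> length pre + length w"
  shows "entry (pre @ w @ suf) t = w ! (t - length pre - 1)"
  using assms by (auto simp: entry_def nth_append)

lemma read_dist_commute: "read_dist n x y = read_dist n y x"
  unfolding read_dist_def by (rule arg_cong[where f = card]) auto

lemma entry_Suc_eq_if_read2_eq:
  "read2 x (Suc t) = read2 y (Suc t) \<Longrightarrow> entry x t = entry y t \<Longrightarrow> entry x (Suc t) = entry y (Suc t)"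
  by (simp add: read2_def)

lemma entry_swap_if_read2_eq:
  "read2 x (Suc t) = read2 y (Suc t) \<Longrightarrow> entry x t \<noteq> entry y t \<Longrightarrow>
    entry x t = entry y (Suc t) \<and> entry x (Suc t) = entry y t"
  by (auto simp: read2_def add_eq_conv_ex)

definition swap_segment :: "nat list \<Rightarrow> nat list \<Rightarrow> nat \<Rightarrow> nat \<Rightarrow> bool" where
  "swap_segment x y u v \<longleftrightarrow> 1 \<le> u \<and> u \<le> v \<and>
     (\<forall>t. t < u \<or> v < t \<longrightarrow> entry x t = entry y t) \<and>
     (\<forall>t. u \<le> t \<and> t < v \<longrightarrow> entry x t = entry y (Suc t) \<and> entry x (Suc t) = entry y t)"

lemma read_dist_le_2_if_swap_segment:
  assumes "swap_segment x y u v"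
  shows "read_dist n x y \<le> 2"
proof -
  have outside: "\<And>t. t < u \<or> v < t \<Longrightarrow> entry x t = entry y t"
    and swap: "\<And>t. u \<le> t \<Longrightarrow> t < v \<Longrightarrow> entry x t = entry y (Suc t) \<and> entry x (Suc t) = entry y t"
    using assms by (auto simp: swap_segment_def)
  have "{i \<in> {1..n+1}. read2 x i \<noteq> read2 y i} \<subseteq> {u, Suc v}"
  proof (rule subsetI, rule ccontr)
    fix i assume i: "i \<in> {i \<in> {1..n+1}. read2 x i \<noteq> read2 y i}" and "i \<notin> {u, Suc v}"
    have "read2 x i = read2 y i"
    proof (cases "i < u \<or> Suc v < i")
      case True
      then have "i - 1 < u \<or> v < i - 1" "i < u \<or> v < i"
        by auto
      then have "entry x (i - 1) = entry y (i - 1)" "entry x i = entry y i"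
        using outside by blast+
      then show ?thesis by (simp add: read2_def)
    next
      case False
      with \<open>i \<notin> {u, Suc v}\<close> i have "u \<le> i - 1" "i - 1 < v" "i \<ge> 1" by auto
      with swap[of "i - 1"] have "entry x (i - 1) = entry y i" "entry x i = entry y (i - 1)"
        by simp_all
      then show ?thesis by (simp add: read2_def add_mset_commute)
    qed
    with i show False by auto
  qed
  then have "read_dist n x y \<le> card {u, Suc v}"
    unfolding read_dist_def by (intro card_mono) auto
  also have "\<dots> \<le> 2"
    by (simp add: card_insert_if)
  finally show ?thesis .
qed

lemma swap_segment_diff_alternates:
  assumes "swap_segment x y u v" "j \<le> v - u"
  shows "int (entry x (u + j)) - int (entry y (u + j)) = (-1) ^ j * (int (entry x u) - int (entry y u))"
  using assms(2)
proof (induction j)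
  case (Suc j)
  then have "u \<le> u + j" "u + j < v" by auto
  then have "entry x (u + j) = entry y (Suc (u + j))" "entry x (Suc (u + j)) = entry y (u + j)"
    using assms(1) unfolding swap_segment_def by blast+
  with Suc show ?case by simp
qed simp

lemma read2_eq_except_two:
  assumes "read_dist n x y \<le> 2" and "i \<noteq> j" and "i \<in> {1..n+1}" "j \<in> {1..n+1}"
    and "read2 x i \<noteq> read2 y i" "read2 x j \<noteq> read2 y j"
    and "k \<in> {1..n+1}" "k \<noteq> i" "k \<noteq> j"
  shows "read2 x k = read2 y k"
proof (rule ccontr)
  assume "read2 x k \<noteq> read2 y k"
  then have "card {i, j, k} \<le> read_dist n x y"
    unfolding read_dist_def using assms(3-7) by (intro card_mono) auto
  moreover have "card {i, j, k} = 3"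
    using assms(2,8,9) by auto
  ultimately show False
    using assms(1) by simp
qed

lemma entry_eq_if_read2_eq_after:
  assumes "length x = n" "length y = n" and "entry x w = entry y w"
    and read: "\<And>i. w < i \<Longrightarrow> i \<le> Suc n \<Longrightarrow> read2 x i = read2 y i" and "w \<le> t"
  shows "entry x t = entry y t"
  using \<open>w \<le> t\<close>
proof (induction t rule: dec_induct)
  case (step t)
  show ?case
  proof (cases "Suc t \<le> Suc n")
    case True
    with step read[of "Suc t"] show ?thesis
      by (intro entry_Suc_eq_if_read2_eq) auto
  next
    case False
    then show ?thesis
      using assms(1,2) entry_beyond_length[of _ "Suc t"] by simp
  qed
qed (fact assms(3))

lemma first_difference:
  assumes x: "length x = n" and y: "length y = n" and "x \<noteq> y"
  obtains u where "1 \<le> u" "u \<le> n" "entry x u \<noteq> entry y u" "\<And>t. t < u \<Longrightarrow> entry x t = entry y t"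
proof -
  have "\<exists>t. entry x t \<noteq> entry y t"
    using entry_eqI[of x y] x y \<open>x \<noteq> y\<close> by auto
  then obtain u where u: "entry x u \<noteq> entry y u" "\<And>t. t < u \<Longrightarrow> entry x t = entry y t"
    unfolding exists_least_iff[of "\<lambda>t. entry x t \<noteq> entry y t"] by blast
  moreover have "1 \<le> u" "u \<le> n"
    using u x y entry_beyond_length[of x u] entry_beyond_length[of y u] by (cases u; fastforce)+
  ultimately show thesis
    using that by blast
qed

lemma first_agreement_after:
  assumes x: "length x = n" and y: "length y = n" and "u \<le> n"
  obtains w where "u < w" "w \<le> Suc n" "entry x w = entry y w"
    "\<And>t. u < t \<Longrightarrow> t < w \<Longrightarrow> entry x t \<noteq> entry y t"
proof -
  have "\<exists>t. u < t \<and> entry x t = entry y t"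
    using \<open>u \<le> n\<close> x y entry_beyond_length[of _ "Suc n"] by (intro exI[of _ "Suc n"]) auto
  then obtain w where w: "u < w" "entry x w = entry y w"
    and least: "\<And>t. t < w \<Longrightarrow> \<not> (u < t \<and> entry x t = entry y t)"
    unfolding exists_least_iff[of "\<lambda>t. u < t \<and> entry x t = entry y t"] by blast
  moreover have "w \<le> Suc n"
    using least[of "Suc n"] \<open>u \<le> n\<close> x y entry_beyond_length[of _ "Suc n"] by force
  ultimately show thesis
    using that by blast
qed

lemma swap_segment_if_read_dist_le_2:
  assumes x: "length x = n" and y: "length y = n" and "x \<noteq> y" and dist: "read_dist n x y \<le> 2"
  obtains u v where "swap_segment x y u v" "v \<le> n" "entry x u \<noteq> entry y u"
proof -
  obtain u where u: "1 \<le> u" "u \<le> n" "entry x u \<noteq> entry y u"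
    and before: "\<And>t. t < u \<Longrightarrow> entry x t = entry y t"
    using first_difference[OF x y \<open>x \<noteq> y\<close>] by blast
  obtain w where w: "u < w" "w \<le> Suc n" "entry x w = entry y w"
    and between: "\<And>t. u < t \<Longrightarrow> t < w \<Longrightarrow> entry x t \<noteq> entry y t"
    using first_agreement_after[OF x y \<open>u \<le> n\<close>] by blast
  have differ: "entry x t \<noteq> entry y t" if "u \<le> t" "t < w" for t
    using between[of t] u(3) that by (cases "t = u") auto
  have "read2 x u \<noteq> read2 y u"
    unfolding read2_def using u before[of "u - 1"] by auto
  moreover have "read2 x w \<noteq> read2 y w"
  proof -
    have "read2 z w = {#entry z w, entry z (w - 1)#}" for z
      by (simp add: read2_def add_mset_commute)
    then show ?thesis
      using differ[of "w - 1"] w by auto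
  qed
  ultimately have same_read: "read2 x i = read2 y i"
    if "1 \<le> i" "i \<le> Suc n" "i \<noteq> u" "i \<noteq> w" for i
    using read2_eq_except_two[OF dist, of u w i] that u w by auto
  have "swap_segment x y u (w - 1)"
    unfolding swap_segment_def
  proof (intro conjI allI impI)
    fix t assume "t < u \<or> w - 1 < t"
    then show "entry x t = entry y t"
      using before entry_eq_if_read2_eq_after[OF x y w(3), of t] same_read w(1) by force
  next
    fix t assume t: "u \<le> t \<and> t < w - 1"
    then have "t < w" "Suc t \<noteq> u" "Suc t \<noteq> w" "Suc t \<le> Suc n"
      using w(2) by linarith+
    then have "read2 x (Suc t) = read2 y (Suc t)" "entry x t \<noteq> entry y t"
      using differ[of t] same_read[of "Suc t"] t by auto
    then show "entry x t = entry y (Suc t)" "entry x (Suc t) = entry y t"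
      using entry_swap_if_read2_eq by blast+
  qed (use u w in auto)
  then show thesis
    using that w(2) u(3) by simp
qed

subsection \<open>The lower bound\<close>

text \<open>The alternating word 0101... of length l whose phase flips between positions k - 1 and k
  (counting from 0); any two of these l + 1 words are related by a swap segment.\<close>
definition shifted_alternation :: "nat \<Rightarrow> nat \<Rightarrow> nat list" where
  "shifted_alternation l k = map (\<lambda>t. if t < k then t mod 2 else Suc t mod 2) [0..<l]"

definition shifted_alternations :: "nat \<Rightarrow> nat list set" where
  "shifted_alternations l = shifted_alternation l ` {..l}"

lemma length_shifted_alternation [simp]: "length (shifted_alternation l k) = l"
  by (simp add: shifted_alternation_def)

lemma nth_shifted_alternation:
  "t < l \<Longrightarrow> shifted_alternation l k ! t = (if t < k then t mod 2 else Suc t mod 2)"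
  by (simp add: shifted_alternation_def)

lemma inj_on_shifted_alternation: "inj_on (shifted_alternation l) {..l}"
proof (rule inj_onI, rule ccontr)
  fix a b assume ab: "a \<in> {..l}" "b \<in> {..l}" "shifted_alternation l a = shifted_alternation l b"
    and "a \<noteq> b"
  then have "min a b < l"
    by auto
  then have "shifted_alternation l a ! min a b \<noteq> shifted_alternation l b ! min a b"
    using \<open>a \<noteq> b\<close> by (simp add: nth_shifted_alternation min_def) presburger
  with ab show False
    by simp
qed

lemma card_shifted_alternations: "card (shifted_alternations l) = l + 1"
  unfolding shifted_alternations_def by (simp add: card_image inj_on_shifted_alternation)

lemma shifted_alternations_subset: "q \<ge> 2 \<Longrightarrow> shifted_alternations l \<subseteq> Sigma_n q l"
  by (auto simp: shifted_alternations_def shifted_alternation_def Sigma_n_def)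

lemma swap_segment_shifted_alternation:
  assumes "j < k" "k \<le> l"
  shows "swap_segment (pre @ shifted_alternation l j @ suf) (pre @ shifted_alternation l k @ suf)
           (length pre + j + 1) (length pre + k)"
  unfolding swap_segment_def
proof (intro conjI allI impI)
  let ?s = "length pre" and ?x = "pre @ shifted_alternation l j @ suf"
    and ?y = "pre @ shifted_alternation l k @ suf"
  show "?s + j + 1 \<le> ?s + k"
    using assms by simp
  fix t
  show "entry ?x t = entry ?y t" if "t < ?s + j + 1 \<or> ?s + k < t"
  proof (cases "t \<le> ?s \<or> ?s + l < t")
    case True
    then show ?thesis by (intro entry_append_outside) auto
  next
    case False
    then have "?s < t" "t \<le> ?s + l"
      by auto
    then show ?thesis
      using that assms by (simp add: entry_append_inside nth_shifted_alternation) linarith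
  qed
  assume t: "?s + j + 1 \<le> t \<and> t < ?s + k"
  define i where "i = t - Suc ?s"
  have i: "t = Suc (?s + i)" "j \<le> i" "Suc i < k"
    using t by (auto simp: i_def)
  show "entry ?x t = entry ?y (Suc t)" "entry ?x (Suc t) = entry ?y t"
    using i assms unfolding i(1) by (simp_all add: entry_append_inside nth_shifted_alternation)
qed simp

lemma two_read_code_shifted_alternation_unique:
  assumes code: "two_read_code q n 3 C"
    and in_C: "pre @ shifted_alternation l a @ suf \<in> C" "pre @ shifted_alternation l b @ suf \<in> C"
    and "a \<le> l" "b \<le> l"
  shows "a = b"
proof (rule ccontr)
  assume "a \<noteq> b"
  let ?x = "pre @ shifted_alternation l a @ suf" and ?y = "pre @ shifted_alternation l b @ suf"
  have "?x \<noteq> ?y"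
    using \<open>a \<noteq> b\<close> inj_on_shifted_alternation assms(4,5) by (auto dest: inj_onD)
  have "read_dist n ?x ?y \<le> 2"
  proof (cases "a < b")
    case True
    then show ?thesis
      using swap_segment_shifted_alternation \<open>b \<le> l\<close> read_dist_le_2_if_swap_segment by blast
  next
    case False
    then have "b < a"
      using \<open>a \<noteq> b\<close> by simp
    then show ?thesis
      using swap_segment_shifted_alternation \<open>a \<le> l\<close> read_dist_le_2_if_swap_segment
        read_dist_commute by metis
  qed
  moreover have "read_dist n ?x ?y \<ge> 3"
    using code in_C \<open>?x \<noteq> ?y\<close> by (auto simp: two_read_code_def)
  ultimately show False
    by simp
qed

definition block :: "nat \<Rightarrow> nat \<Rightarrow> nat list \<Rightarrow> nat list" where
  "block l b x = take l (drop (b * l) x)"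

definition replace_block :: "nat \<Rightarrow> nat \<Rightarrow> nat list \<Rightarrow> nat list \<Rightarrow> nat list" where
  "replace_block l b x w = take (b * l) x @ w @ drop (b * l + l) x"

lemma block_decomp: "x = take (b * l) x @ block l b x @ drop (b * l + l) x"
proof -
  have "take l (drop (b * l) x) @ drop (b * l + l) x = drop (b * l) x"
    by (metis append_take_drop_id drop_drop add.commute)
  then show ?thesis
    unfolding block_def by simp
qed

lemma block_0: "block l 0 x = take l x"
  by (simp add: block_def)

lemma block_Suc: "block l (Suc b) x = block l b (drop l x)"
  by (simp add: block_def add.commute)

lemma block_replace_block_less:
  assumes "b' < b" "length w = l" "b * l + l \<le> length x"
  shows "block l b' (replace_block l b x w) = block l b' x"
proof -
  have "b' * l + l \<le> b * l"
    using assms(1) by (metis add.commute mult_Suc less_eq_Suc_le mult_le_mono1)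
  then show ?thesis
    using assms by (simp add: block_def replace_block_def take_drop min_def)
qed

lemma block_replace_block_same:
  assumes "length w = l" "b * l + l \<le> length x"
  shows "block l b (replace_block l b x w) = w"
  using assms by (simp add: block_def replace_block_def)

lemma replace_block_eq_replace_block_iff:
  assumes "length w = l" "length w' = l" "b * l + l \<le> length x" "b * l + l \<le> length x'"
  shows "replace_block l b x w = replace_block l b x' w' \<longleftrightarrow>
    take (b * l) x = take (b * l) x' \<and> w = w' \<and> drop (b * l + l) x = drop (b * l + l) x'"
  using assms by (auto simp: replace_block_def append_eq_append_conv)

lemma replace_block_in_Sigma_n:
  assumes "x \<in> Sigma_n q n" "w \<in> Sigma_n q l" "b * l + l \<le> n"
  shows "replace_block l b x w \<in> Sigma_n q n"
  using assms by (auto simp: Sigma_n_def replace_block_def dest: in_set_takeD in_set_dropD)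

definition first_good_block :: "nat \<Rightarrow> nat \<Rightarrow> nat list \<Rightarrow> nat" where
  "first_good_block l m x = (LEAST b. b < m \<and> block l b x \<in> shifted_alternations l)"

lemma first_good_block:
  assumes "b < m" "block l b x \<in> shifted_alternations l" "m * l \<le> length x"
  shows "first_good_block l m x < m" "block l (first_good_block l m x) x \<in> shifted_alternations l"
    "first_good_block l m x * l + l \<le> length x"
proof -
  have good: "first_good_block l m x < m \<and> block l (first_good_block l m x) x \<in> shifted_alternations l"
    unfolding first_good_block_def by (rule LeastI[of _ b]) (use assms in auto)
  then show "first_good_block l m x < m" "block l (first_good_block l m x) x \<in> shifted_alternations l"
    by auto
  have "first_good_block l m x * l + l = Suc (first_good_block l m x) * l"
    by simp
  also have "\<dots> \<le> m * l"
    using good by (intro mult_le_mono1) auto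
  finally show "first_good_block l m x * l + l \<le> length x"
    using assms(3) by simp
qed

lemma first_good_block_replace_block:
  assumes "b < m" "block l b x \<in> shifted_alternations l" "m * l \<le> length x"
    and "w \<in> shifted_alternations l"
  shows "first_good_block l m (replace_block l (first_good_block l m x) x w) = first_good_block l m x"
proof -
  let ?b = "first_good_block l m x"
  note good = first_good_block[OF assms(1-3)]
  have "length w = l"
    using assms(4) by (auto simp: shifted_alternations_def)
  show ?thesis
    unfolding first_good_block_def[of l m "replace_block l ?b x w"]
  proof (rule Least_equality)
    show "?b < m \<and> block l ?b (replace_block l ?b x w) \<in> shifted_alternations l"
      using good block_replace_block_same[OF \<open>length w = l\<close> good(3)] assms(4) by simp
  next
    fix b' assume b': "b' < m \<and> block l b' (replace_block l ?b x w) \<in> shifted_alternations l"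
    show "?b \<le> b'"
    proof (rule ccontr)
      assume "\<not> ?b \<le> b'"
      then have "b' < ?b" by simp
      with b' block_replace_block_less[OF this \<open>length w = l\<close> good(3)] show False
        unfolding first_good_block_def using not_less_Least by fastforce
    qed
  qed
qed

definition overwrite_good_block :: "nat \<Rightarrow> nat \<Rightarrow> nat list \<Rightarrow> nat \<Rightarrow> nat list" where
  "overwrite_good_block l m c k = replace_block l (first_good_block l m c) c (shifted_alternation l k)"

lemma overwrite_good_block_in_Sigma_n:
  assumes q: "q \<ge> 2" and c: "c \<in> Sigma_n q n" and "b < m" "block l b c \<in> shifted_alternations l"
    and "m * l \<le> n" and "k \<le> l"
  shows "overwrite_good_block l m c k \<in> Sigma_n q n"
proof -
  have "shifted_alternation l k \<in> Sigma_n q l"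
    using shifted_alternations_subset[OF q] \<open>k \<le> l\<close> by (auto simp: shifted_alternations_def)
  moreover have "first_good_block l m c * l + l \<le> n"
    using first_good_block(3)[OF assms(3,4)] assms(5) c by (simp add: Sigma_n_def)
  ultimately show ?thesis
    unfolding overwrite_good_block_def using c by (rule replace_block_in_Sigma_n[rotated])
qed

text \<open>Distinct codewords never differ by a swap inside one block, so a codeword is determined by
  any of its l + 1 overwritten versions.\<close>
lemma overwrite_good_block_inj:
  assumes code: "two_read_code q n 3 C" and "m * l \<le> n"
    and c: "c \<in> C" "b < m" "block l b c \<in> shifted_alternations l" "k \<le> l"
    and c': "c' \<in> C" "b' < m" "block l b' c' \<in> shifted_alternations l" "k' \<le> l"
    and eq: "overwrite_good_block l m c k = overwrite_good_block l m c' k'"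
  shows "c = c' \<and> k = k'"
proof -
  have len: "length c = n" "length c' = n"
    using code c(1) c'(1) by (auto simp: two_read_code_def Sigma_n_def)
  note good = first_good_block[OF c(2,3)] and good' = first_good_block[OF c'(2,3)]
  define b0 where "b0 = first_good_block l m c"
  have "first_good_block l m c' = b0"
    using first_good_block_replace_block[OF c(2,3) _, of "shifted_alternation l k"]
      first_good_block_replace_block[OF c'(2,3) _, of "shifted_alternation l k'"]
      eq len \<open>m * l \<le> n\<close> c(4) c'(4)
    by (simp add: overwrite_good_block_def b0_def shifted_alternations_def)
  then have same: "take (b0 * l) c = take (b0 * l) c'" "drop (b0 * l + l) c = drop (b0 * l + l) c'"
    and "shifted_alternation l k = shifted_alternation l k'"
    using eq good(3) good'(3) len \<open>m * l \<le> n\<close>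
    by (simp_all add: overwrite_good_block_def b0_def replace_block_eq_replace_block_iff)
  then have "k = k'"
    using inj_on_shifted_alternation c(4) c'(4) by (auto dest: inj_onD)
  obtain a a' where "a \<le> l" "block l b0 c = shifted_alternation l a"
    "a' \<le> l" "block l b0 c' = shifted_alternation l a'"
    using good(2) good'(2) \<open>first_good_block l m c' = b0\<close> len \<open>m * l \<le> n\<close>
    by (auto simp: shifted_alternations_def b0_def)
  define pre where "pre = take (b0 * l) c"
  define suf where "suf = drop (b0 * l + l) c"
  have c_eq: "c = pre @ shifted_alternation l a @ suf"
    using block_decomp[of c b0 l] unfolding \<open>block l b0 c = _\<close> pre_def suf_def .
  have c'_eq: "c' = pre @ shifted_alternation l a' @ suf"
    using block_decomp[of c' b0 l] unfolding \<open>block l b0 c' = _\<close> same[symmetric] pre_def suf_def .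
  have "a = a'"
    using c(1) c'(1) unfolding c_eq c'_eq
    by (rule two_read_code_shifted_alternation_unique[OF code _ _ \<open>a \<le> l\<close> \<open>a' \<le> l\<close>])
  then show ?thesis
    using c_eq c'_eq \<open>k = k'\<close> by simp
qed

lemma card_two_read_code_with_good_block:
  assumes q: "q \<ge> 2" and code: "two_read_code q n 3 C" and "m * l \<le> n"
  shows "card (C \<inter> {x. \<exists>b<m. block l b x \<in> shifted_alternations l}) * (l + 1) \<le> q ^ n"
proof -
  define V where "V = C \<inter> {x. \<exists>b<m. block l b x \<in> shifted_alternations l}"
  let ?f = "\<lambda>(c, k). overwrite_good_block l m c k"
  have "inj_on ?f (V \<times> {..l})"
    by (rule inj_onI) (auto simp: V_def dest: overwrite_good_block_inj[OF code \<open>m * l \<le> n\<close>])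
  moreover have "?f ` (V \<times> {..l}) \<subseteq> Sigma_n q n"
    using code \<open>m * l \<le> n\<close>
    by (auto simp: V_def two_read_code_def intro: overwrite_good_block_in_Sigma_n[OF q])
  ultimately have "card (V \<times> {..l}) \<le> q ^ n"
    using card_inj_on_le[OF _ _ finite_Sigma_n] card_Sigma_n by metis
  moreover have "finite V"
    using finite_two_read_code[OF code] by (simp add: V_def)
  ultimately show ?thesis
    by (simp add: V_def card_cartesian_product)
qed

lemma card_Sigma_n_append:
  "card {x \<in> Sigma_n q (a + b). P (take a x) \<and> Q (drop a x)} =
   card {w \<in> Sigma_n q a. P w} * card {w \<in> Sigma_n q b. Q w}"
proof -
  let ?A = "{w \<in> Sigma_n q a. P w}" and ?B = "{w \<in> Sigma_n q b. Q w}"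
  have "bij_betw (\<lambda>(u, v). u @ v) (?A \<times> ?B) {x \<in> Sigma_n q (a + b). P (take a x) \<and> Q (drop a x)}"
  proof (rule bij_betw_imageI)
    show "inj_on (\<lambda>(u, v). u @ v) (?A \<times> ?B)"
    proof (rule inj_onI)
      fix p p' assume "p \<in> ?A \<times> ?B" "p' \<in> ?A \<times> ?B"
        and eq: "(\<lambda>(u, v). u @ v) p = (\<lambda>(u, v). u @ v) p'"
      then obtain u v u' v' where "p = (u, v)" "p' = (u', v')" "length u = a" "length u' = a"
        by (cases p, cases p') (auto simp: Sigma_n_def)
      then show "p = p'"
        using eq by simp
    qed
    show "(\<lambda>(u, v). u @ v) ` (?A \<times> ?B) = {x \<in> Sigma_n q (a + b). P (take a x) \<and> Q (drop a x)}"
    proof (intro equalityI subsetI)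
      fix x assume "x \<in> {x \<in> Sigma_n q (a + b). P (take a x) \<and> Q (drop a x)}"
      then have "(take a x, drop a x) \<in> ?A \<times> ?B"
        by (auto simp: Sigma_n_def dest: in_set_takeD in_set_dropD)
      then show "x \<in> (\<lambda>(u, v). u @ v) ` (?A \<times> ?B)"
        by (metis (no_types, lifting) append_take_drop_id case_prod_conv image_eqI)
    qed (auto simp: Sigma_n_def)
  qed
  then show ?thesis
    by (simp add: bij_betw_same_card[symmetric] card_cartesian_product)
qed

lemma card_without_good_block:
  assumes "q \<ge> 2"
  shows "card {x \<in> Sigma_n q (m * l + r). \<forall>b<m. block l b x \<notin> shifted_alternations l} =
    (q ^ l - (l + 1)) ^ m * q ^ r"
proof (induction m)
  case 0
  then show ?case by (simp add: card_Sigma_n)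
next
  case (Suc m)
  have "card {w \<in> Sigma_n q l. w \<notin> shifted_alternations l} = q ^ l - (l + 1)"
  proof -
    have "{w \<in> Sigma_n q l. w \<notin> shifted_alternations l} = Sigma_n q l - shifted_alternations l"
      by auto
    then show ?thesis
      using shifted_alternations_subset[OF assms] card_shifted_alternations card_Sigma_n
      by (simp add: card_Diff_subset shifted_alternations_def)
  qed
  moreover have "{x \<in> Sigma_n q (Suc m * l + r). \<forall>b<Suc m. block l b x \<notin> shifted_alternations l} =
        {x \<in> Sigma_n q (l + (m * l + r)). take l x \<notin> shifted_alternations l \<and>
           (\<forall>b<m. block l b (drop l x) \<notin> shifted_alternations l)}"
    by (auto simp: All_less_Suc2 block_Suc block_0 add.assoc)
  ultimately show ?case
    using Suc.IH card_Sigma_n_append[of q l "m * l + r" "\<lambda>w. w \<notin> shifted_alternations l"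
        "\<lambda>w. \<forall>b<m. block l b w \<notin> shifted_alternations l"]
    by simp
qed

lemma one_minus_power_le_exp:
  fixes x :: real
  assumes "0 \<le> x" "x \<le> 1"
  shows "(1 - x) ^ m \<le> exp (- (x * m))"
proof -
  have "(1 - x) ^ m \<le> exp (- x) ^ m"
    using assms exp_ge_add_one_self[of "-x"] by (intro power_mono) auto
  also have "\<dots> = exp (- (x * m))"
    by (simp add: exp_of_nat_mult[symmetric] mult.commute)
  finally show ?thesis .
qed

lemma card_without_good_block_le:
  assumes q: "q \<ge> 2"
  shows "real ((q ^ l - (l + 1)) ^ m * q ^ r) \<le>
    real q ^ (m * l + r) * exp (- ((real l + 1) * real m / real q ^ l))"
proof -
  have "l + 1 \<le> 2 ^ l"
    using Suc_leI[OF less_exp[of l]] by simp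
  also have "(2::nat) ^ l \<le> q ^ l"
    using q by (intro power_mono) auto
  finally have le_nat: "l + 1 \<le> q ^ l" .
  then have le: "real l + 1 \<le> real q ^ l"
    by (metis of_nat_1 of_nat_add of_nat_le_iff of_nat_power)
  have pos: "real q ^ l > 0"
    using q by simp
  have "real (q ^ l - (l + 1)) = real q ^ l - (real l + 1)"
    using le_nat by (simp add: of_nat_diff)
  also have "\<dots> = real q ^ l * (1 - (real l + 1) / real q ^ l)"
    using pos by (simp add: right_diff_distrib)
  finally have "real ((q ^ l - (l + 1)) ^ m * q ^ r) = (real q ^ l * (1 - (real l + 1) / real q ^ l)) ^ m * real q ^ r"
    by simp
  also have "\<dots> = real q ^ (m * l + r) * (1 - (real l + 1) / real q ^ l) ^ m"
    by (simp add: power_mult_distrib power_add power_mult mult.commute mult.left_commute)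
  also have "\<dots> \<le> real q ^ (m * l + r) * exp (- ((real l + 1) / real q ^ l * m))"
    using pos le by (intro mult_left_mono one_minus_power_le_exp) auto
  finally show ?thesis
    by simp
qed

definition block_code_bound :: "nat \<Rightarrow> nat \<Rightarrow> nat \<Rightarrow> real" where
  "block_code_bound q n l = 1 / (real l + 1) + exp (- ((real l + 1) * real (n div l) / real q ^ l))"

lemma card_two_read_code_le:
  assumes q: "q \<ge> 2" and code: "two_read_code q n 3 C"
  shows "real (card C) \<le> real q ^ n * block_code_bound q n l"
proof -
  define m where "m = n div l"
  define r where "r = n mod l"
  have n: "n = m * l + r"
    by (simp add: m_def r_def)
  define V where "V = {x. \<exists>b<m. block l b x \<in> shifted_alternations l}"
  define U where "U = {x \<in> Sigma_n q n. \<forall>b<m. block l b x \<notin> shifted_alternations l}"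
  have "C - V \<subseteq> U"
    using code by (auto simp: U_def V_def two_read_code_def)
  then have "card (C - V) \<le> card U"
    by (intro card_mono) (auto simp: U_def finite_Sigma_n)
  moreover have "card C \<le> card (C \<inter> V) + card (C - V)"
    by (metis Int_Diff_Un card_Un_le)
  ultimately have "real (card C) \<le> real (card (C \<inter> V)) + real (card U)"
    by linarith
  moreover have "card (C \<inter> V) * (l + 1) \<le> q ^ n"
    using card_two_read_code_with_good_block[OF q code, of m l] n by (simp add: V_def)
  then have "real (card (C \<inter> V) * (l + 1)) \<le> real (q ^ n)"
    by (simp only: of_nat_le_iff)
  then have "real (card (C \<inter> V)) \<le> real q ^ n * (1 / (real l + 1))"
    by (simp add: field_simps)
  moreover have "real (card U) \<le> real q ^ n * exp (- ((real l + 1) * real m / real q ^ l))"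
    using card_without_good_block[OF q, of m l r] card_without_good_block_le[OF q, of l m r] n
    by (simp add: U_def)
  ultimately show ?thesis
    unfolding block_code_bound_def m_def[symmetric] distrib_left by linarith
qed

subsection \<open>The upper bound\<close>

definition alternating_run :: "nat list \<Rightarrow> nat \<Rightarrow> nat \<Rightarrow> bool" where
  "alternating_run x u K \<longleftrightarrow> (\<forall>t. u \<le> t \<and> Suc t < u + K \<longrightarrow>
      entry x t \<noteq> entry x (Suc t) \<and> (Suc (Suc t) < u + K \<longrightarrow> entry x t = entry x (Suc (Suc t))))"

definition no_alternating_run :: "nat \<Rightarrow> nat \<Rightarrow> nat list \<Rightarrow> bool" where
  "no_alternating_run K n x \<longleftrightarrow> (\<forall>u. 1 \<le> u \<and> u + K \<le> Suc n \<longrightarrow> \<not> alternating_run x u K)"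

definition digit_sum :: "nat \<Rightarrow> nat list \<Rightarrow> int" where
  "digit_sum n x = (\<Sum>t = 1..n. int (entry x t))"

definition weighted_digit_sum :: "nat \<Rightarrow> nat list \<Rightarrow> int" where
  "weighted_digit_sum n x = (\<Sum>t = 1..n. int t * int (entry x t))"

definition checksum_code :: "nat \<Rightarrow> nat \<Rightarrow> nat \<Rightarrow> int \<Rightarrow> int \<Rightarrow> nat list set" where
  "checksum_code q P n r1 r2 = {x \<in> Sigma_n q n. no_alternating_run (2 * P) n x \<and>
     digit_sum n x mod int q = r1 \<and> weighted_digit_sum n x mod int P = r2}"

lemma alternating_sum_ones: "(\<Sum>j = 0..k. (-1::int) ^ j) = (if even k then 1 else 0)"
  by (induction k) auto

lemma alternating_sum_linear: "(\<Sum>j = 0..Suc (2 * m). (-1::int) ^ j * int (u + j)) = - int (Suc m)"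
proof (induction m)
  case (Suc m)
  have "Suc (2 * Suc m) = Suc (Suc (Suc (2 * m)))"
    by simp
  then show ?case
    unfolding sum.atLeast0_atMost_Suc using Suc by simp
qed simp

lemma swap_segment_weighted_sum_diff:
  fixes w :: "nat \<Rightarrow> int"
  assumes swap: "swap_segment x y u v" and "v \<le> n"
  shows "(\<Sum>t = 1..n. w t * int (entry x t)) - (\<Sum>t = 1..n. w t * int (entry y t)) =
    (\<Sum>j = 0..v - u. (-1) ^ j * w (u + j)) * (int (entry x u) - int (entry y u))"
proof -
  define h where "h t = int (entry x t) - int (entry y t)" for t
  have "u \<le> v" "1 \<le> u"
    using swap by (auto simp: swap_segment_def)
  have "h t = 0" if "t \<notin> {u..v}" for t
    using swap that by (auto simp: swap_segment_def h_def)
  then have "(\<Sum>t = 1..n. w t * h t) = (\<Sum>t = u..v. w t * h t)"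
    using \<open>1 \<le> u\<close> \<open>v \<le> n\<close> by (intro sum.mono_neutral_right) auto
  also have "\<dots> = (\<Sum>j = 0..v - u. w (u + j) * h (u + j))"
    using \<open>u \<le> v\<close> by (subst sum.atLeastAtMost_shift_0) (simp_all add: comp_def)
  also have "\<dots> = (\<Sum>j = 0..v - u. (-1) ^ j * w (u + j) * h u)"
    using swap_segment_diff_alternates[OF swap] by (intro sum.cong) (auto simp: h_def)
  finally show ?thesis
    by (simp add: h_def sum_subtractf right_diff_distrib sum_distrib_right)
qed

lemma alternating_run_if_swap_segment:
  assumes swap: "swap_segment x y u v" and "entry x u \<noteq> entry y u" and "K \<le> Suc (v - u)"
  shows "alternating_run x u K"
  unfolding alternating_run_def
proof (intro allI impI conjI)
  have u_v: "u \<le> v"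
    using swap by (simp add: swap_segment_def)
  have swapped: "entry x t = entry y (Suc t)" "entry x (Suc t) = entry y t" if "u \<le> t" "t < v" for t
    using swap that by (auto simp: swap_segment_def)
  fix t assume t: "u \<le> t \<and> Suc t < u + K"
  then have "t < v"
    using assms(3) u_v by linarith
  have "t - u \<le> v - u" "u + (t - u) = t"
    using t \<open>t < v\<close> by auto
  then have "entry x t \<noteq> entry y t"
    using swap_segment_diff_alternates[OF swap, of "t - u"] assms(2) by auto
  then show "entry x t \<noteq> entry x (Suc t)"
    using swapped(2)[of t] t \<open>t < v\<close> by simp
  assume "Suc (Suc t) < u + K"
  then have "Suc t < v"
    using assms(3) u_v by linarith
  then show "entry x t = entry x (Suc (Suc t))"
    using swapped(1)[of t] swapped(2)[of "Suc t"] t by simp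
qed

lemma digit_sum_mod_ne_if_swap_segment:
  assumes q: "q \<ge> 1" and xy: "x \<in> Sigma_n q n" "y \<in> Sigma_n q n"
    and swap: "swap_segment x y u v" "v \<le> n" "entry x u \<noteq> entry y u" and "even (v - u)"
  shows "digit_sum n x mod int q \<noteq> digit_sum n y mod int q"
proof
  define d where "d = int (entry x u) - int (entry y u)"
  have "d \<noteq> 0" "\<bar>d\<bar> < int q"
    using swap(3) entry_less[OF xy(1) q, of u] entry_less[OF xy(2) q, of u] by (auto simp: d_def)
  assume "digit_sum n x mod int q = digit_sum n y mod int q"
  moreover have "digit_sum n x - digit_sum n y = d"
    using swap_segment_weighted_sum_diff[OF swap(1,2), of "\<lambda>_. 1"] \<open>even (v - u)\<close>
    by (simp add: digit_sum_def alternating_sum_ones d_def)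
  ultimately have "int q dvd d"
    by (simp add: mod_eq_dvd_iff)
  from dvd_imp_le_int[OF \<open>d \<noteq> 0\<close> this] show False
    using \<open>\<bar>d\<bar> < int q\<close> by simp
qed

lemma alternating_run_if_weighted_digit_sum_mod_eq:
  assumes q: "q \<ge> 1" and xy: "x \<in> Sigma_n q n" "y \<in> Sigma_n q n"
    and coprime: "\<And>d. 1 \<le> d \<Longrightarrow> d < q \<Longrightarrow> coprime P d"
    and swap: "swap_segment x y u v" "v \<le> n" "entry x u \<noteq> entry y u" and "odd (v - u)"
    and mod_eq: "weighted_digit_sum n x mod int P = weighted_digit_sum n y mod int P"
  shows "alternating_run x u (2 * P)" "u + 2 * P \<le> Suc n"
proof -
  define d where "d = int (entry x u) - int (entry y u)"
  have "d \<noteq> 0" "\<bar>d\<bar> < int q"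
    using swap(3) entry_less[OF xy(1) q, of u] entry_less[OF xy(2) q, of u] by (auto simp: d_def)
  obtain m where m: "v - u = Suc (2 * m)"
    using \<open>odd (v - u)\<close> by (metis oddE add.commute plus_1_eq_Suc)
  have "weighted_digit_sum n x - weighted_digit_sum n y = - int (Suc m) * d"
    using swap_segment_weighted_sum_diff[OF swap(1,2), of int]
    unfolding m alternating_sum_linear by (simp only: weighted_digit_sum_def d_def)
  with mod_eq have "int P dvd int (Suc m) * d"
    by (metis dvd_minus_iff minus_mult_left mod_eq_dvd_iff)
  moreover have "coprime (int P) d"
    using coprime[of "nat \<bar>d\<bar>"] \<open>d \<noteq> 0\<close> \<open>\<bar>d\<bar> < int q\<close> by (simp add: coprime_int_iff[symmetric])
  ultimately have "int P dvd int (Suc m)"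
    using coprime_dvd_mult_left_iff by blast
  then have "P \<le> Suc m"
    by (simp only: of_nat_dvd_iff) (rule dvd_imp_le, simp_all)
  then have "2 * P \<le> Suc (v - u)"
    using m by simp
  then show "alternating_run x u (2 * P)"
    by (rule alternating_run_if_swap_segment[OF swap(1,3)])
  have "u \<le> v"
    using swap(1) by (simp add: swap_segment_def)
  then show "u + 2 * P \<le> Suc n"
    using \<open>2 * P \<le> Suc (v - u)\<close> swap(2) by linarith
qed

lemma two_read_code_checksum_code:
  assumes q: "q \<ge> 2" and coprime: "\<And>d. 1 \<le> d \<Longrightarrow> d < q \<Longrightarrow> coprime P d"
  shows "two_read_code q n 3 (checksum_code q P n r1 r2)"
  unfolding two_read_code_def
proof (intro conjI ballI impI)
  show "checksum_code q P n r1 r2 \<subseteq> Sigma_n q n"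
    by (auto simp: checksum_code_def)
next
  fix x y assume x: "x \<in> checksum_code q P n r1 r2" and y: "y \<in> checksum_code q P n r1 r2"
    and "x \<noteq> y"
  have xy: "x \<in> Sigma_n q n" "y \<in> Sigma_n q n"
    using x y by (simp_all add: checksum_code_def)
  show "3 \<le> read_dist n x y"
  proof (rule ccontr)
    assume "\<not> 3 \<le> read_dist n x y"
    then obtain u v where swap: "swap_segment x y u v" "v \<le> n" "entry x u \<noteq> entry y u"
      using swap_segment_if_read_dist_le_2[of x n y] xy \<open>x \<noteq> y\<close> by (auto simp: Sigma_n_def)
    show False
    proof (cases "even (v - u)")
      case True
      then show False
        using digit_sum_mod_ne_if_swap_segment[OF _ xy swap] q x y by (simp add: checksum_code_def)
    next
      case False
      then have "alternating_run x u (2 * P)" "u + 2 * P \<le> Suc n"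
        using alternating_run_if_weighted_digit_sum_mod_eq[OF _ xy coprime swap] q x y
        by (simp_all add: checksum_code_def)
      moreover have "1 \<le> u"
        using swap(1) by (simp add: swap_segment_def)
      ultimately show False
        using x by (auto simp: checksum_code_def no_alternating_run_def)
    qed
  qed
qed

lemma entry_eq_if_take_eq:
  assumes "take k x = take k x'" "t \<le> k" "k \<le> length x" "k \<le> length x'"
  shows "entry x t = entry x' t"
proof (cases "t = 0")
  case False
  then have "entry x t = take k x ! (t - 1)"
    using assms(2,3) by (simp add: entry_def)
  also have "\<dots> = take k x' ! (t - 1)"
    by (simp only: assms(1))
  also have "\<dots> = entry x' t"
    using False assms(2,4) by (simp add: entry_def)
  finally show ?thesis .
qed simp

lemma entry_eq_if_drop_eq:
  assumes "drop k x = drop k x'" "length x = length x'" "k < t"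
  shows "entry x t = entry x' t"
proof (cases "t \<le> length x")
  case True
  then have "entry x t = drop k x ! (t - 1 - k)"
    using assms(3) by (simp add: entry_def)
  also have "\<dots> = drop k x' ! (t - 1 - k)"
    by (simp only: assms(1))
  also have "\<dots> = entry x' t"
    using True assms(2,3) by (simp add: entry_def)
  finally show ?thesis .
qed (use assms(2) in \<open>simp add: entry_def\<close>)

text \<open>Inside an alternating run every entry is determined by the one two positions earlier,
  so only the first two entries of the run need to be kept.\<close>
lemma alternating_run_determined:
  assumes len: "length x = n" "length x' = n"
    and run: "alternating_run x u K" "alternating_run x' u K" and "2 \<le> K" "u + K \<le> Suc n"
    and eq: "take (Suc u) x @ drop (u + K - 1) x = take (Suc u) x' @ drop (u + K - 1) x'"
  shows "x = x'"
proof -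
  have prefix: "take (Suc u) x = take (Suc u) x'" and suffix: "drop (u + K - 1) x = drop (u + K - 1) x'"
    using eq len assms(5,6) by (auto simp: append_eq_append_conv)
  have "entry x t = entry x' t" for t
  proof (induction t rule: less_induct)
    case (less t)
    consider "t \<le> Suc u" | "Suc u < t" "t < u + K" | "u + K \<le> t"
      by linarith
    then show ?case
    proof cases
      case 1
      then show ?thesis
        using entry_eq_if_take_eq[OF prefix] len assms(5,6) by simp
    next
      case 2
      define s where "s = t - 2"
      have s: "u \<le> s" "Suc s < u + K" "Suc (Suc s) < u + K" "t = Suc (Suc s)"
        using 2 by (auto simp: s_def)
      have "entry z s = entry z (Suc (Suc s))" if "alternating_run z u K" for z
        using that s(1-3) unfolding alternating_run_def by blast
      then show ?thesis
        using less[of s] run s(4) by simp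
    next
      case 3
      then show ?thesis
        using entry_eq_if_drop_eq[OF suffix] len assms(5) by simp
    qed
  qed
  then show ?thesis
    using len by (intro entry_eqI) auto
qed

lemma card_alternating_run:
  assumes "2 \<le> K" "u + K \<le> Suc n"
  shows "card {x \<in> Sigma_n q n. alternating_run x u K} \<le> q ^ (n + 2 - K)"
proof -
  let ?A = "{x \<in> Sigma_n q n. alternating_run x u K}"
  let ?f = "\<lambda>x. take (Suc u) x @ drop (u + K - 1) x"
  have "inj_on ?f ?A"
    by (rule inj_onI) (use alternating_run_determined assms in \<open>auto simp: Sigma_n_def\<close>)
  moreover have "?f ` ?A \<subseteq> Sigma_n q (n + 2 - K)"
  proof (rule image_subsetI)
    fix x assume "x \<in> ?A"
    then have "set x \<subseteq> {..<q}" "length x = n"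
      by (auto simp: Sigma_n_def)
    then show "?f x \<in> Sigma_n q (n + 2 - K)"
      using assms set_take_subset[of "Suc u" x] set_drop_subset[of "u + K - 1" x]
      by (auto simp: Sigma_n_def)
  qed
  ultimately have "card ?A \<le> card (Sigma_n q (n + 2 - K))"
    by (intro card_inj_on_le finite_Sigma_n)
  then show ?thesis
    by (simp add: card_Sigma_n)
qed

lemma card_with_alternating_run:
  assumes "2 \<le> K"
  shows "card {x \<in> Sigma_n q n. \<not> no_alternating_run K n x} \<le> n * q ^ (n + 2 - K)"
proof -
  let ?U = "{u \<in> {1..n}. u + K \<le> Suc n}"
  have "{x \<in> Sigma_n q n. \<not> no_alternating_run K n x} \<subseteq>
        (\<Union>u\<in>?U. {x \<in> Sigma_n q n. alternating_run x u K})"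
    using assms by (auto simp: no_alternating_run_def)
  then have "card {x \<in> Sigma_n q n. \<not> no_alternating_run K n x} \<le>
        card (\<Union>u\<in>?U. {x \<in> Sigma_n q n. alternating_run x u K})"
    by (intro card_mono) (auto simp: finite_Sigma_n)
  also have "\<dots> \<le> (\<Sum>u\<in>?U. card {x \<in> Sigma_n q n. alternating_run x u K})"
    by (rule card_UN_le) simp
  also have "\<dots> \<le> (\<Sum>u\<in>?U. q ^ (n + 2 - K))"
    using assms by (intro sum_mono card_alternating_run) auto
  also have "\<dots> \<le> n * q ^ (n + 2 - K)"
  proof -
    have "card ?U \<le> card {1..n}"
      by (intro card_mono) auto
    then show ?thesis
      by simp
  qed
  finally show ?thesis .
qed

lemma exists_large_fiber:
  assumes "finite S" "finite R" "R \<noteq> {}" "f ` S \<subseteq> R"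
  shows "\<exists>r\<in>R. card S \<le> card R * card {x \<in> S. f x = r}"
proof -
  define g where "g r = card {x \<in> S. f x = r}" for r
  have "Max (g ` R) \<in> g ` R"
    using assms(2,3) by (intro Max_in) auto
  then obtain r where r: "r \<in> R" "g r = Max (g ` R)"
    by auto
  have max: "g r' \<le> g r" if "r' \<in> R" for r'
    unfolding r(2) using assms(2) that by (intro Max_ge) auto
  have "card S = (\<Sum>r\<in>R. g r)"
    unfolding g_def using sum.group[OF assms(1,2,4), of "\<lambda>_. 1::nat"] by simp
  also have "\<dots> \<le> card R * g r"
    using sum_bounded_above[of R g "g r"] max by simp
  finally show ?thesis
    using r unfolding g_def by blast
qed

lemma card_no_alternating_run_ge:
  assumes "2 \<le> K"
  shows "real q ^ n - real n * real q ^ (n + 2 - K) \<le> real (card {x \<in> Sigma_n q n. no_alternating_run K n x})"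
proof -
  define S where "S = {x \<in> Sigma_n q n. no_alternating_run K n x}"
  define B where "B = {x \<in> Sigma_n q n. \<not> no_alternating_run K n x}"
  have "finite S" "finite B"
    by (simp_all add: S_def B_def finite_Sigma_n)
  moreover have "S \<union> B = Sigma_n q n" "S \<inter> B = {}"
    by (auto simp: S_def B_def)
  ultimately have "card S + card B = q ^ n"
    using card_Un_disjoint[of S B] card_Sigma_n by simp
  then have "real (card S) + real (card B) = real q ^ n"
    by (metis of_nat_add of_nat_power)
  moreover have "card B \<le> n * q ^ (n + 2 - K)"
    unfolding B_def using assms by (rule card_with_alternating_run)
  then have "real (card B) \<le> real n * real q ^ (n + 2 - K)"
    by (metis of_nat_le_iff of_nat_mult of_nat_power)
  ultimately show ?thesis
    unfolding S_def by linarith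
qed

lemma exists_large_checksum_code:
  assumes q: "q \<ge> 2" and "P \<ge> 1"
  shows "\<exists>r1 r2. real q ^ n - real n * real q ^ (n + 2 - 2 * P) \<le>
    real q * real P * real (card (checksum_code q P n r1 r2))"
proof -
  define S where "S = {x \<in> Sigma_n q n. no_alternating_run (2 * P) n x}"
  have large: "real q ^ n - real n * real q ^ (n + 2 - 2 * P) \<le> real (card S)"
    unfolding S_def using \<open>P \<ge> 1\<close> by (intro card_no_alternating_run_ge) simp
  have "finite S"
    by (simp add: S_def finite_Sigma_n)
  define R where "R = {0..<int q} \<times> {0..<int P}"
  define f where "f x = (digit_sum n x mod int q, weighted_digit_sum n x mod int P)" for x
  have "f ` S \<subseteq> R"
    using q \<open>P \<ge> 1\<close> by (auto simp: f_def R_def)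
  moreover have "finite R" "R \<noteq> {}" "card R = q * P"
    using q \<open>P \<ge> 1\<close> by (simp_all add: R_def card_cartesian_product)
  ultimately obtain r where "card S \<le> q * P * card {x \<in> S. f x = r}"
    using exists_large_fiber[of S R f] \<open>finite S\<close> by auto
  moreover obtain r1 r2 where "r = (r1, r2)"
    by (cases r)
  moreover have "{x \<in> S. f x = (r1, r2)} = checksum_code q P n r1 r2"
    by (auto simp: S_def f_def checksum_code_def)
  ultimately have "card S \<le> q * P * card (checksum_code q P n r1 r2)"
    by simp
  then have "real (card S) \<le> real q * real P * real (card (checksum_code q P n r1 r2))"
    by (metis of_nat_le_iff of_nat_mult)
  with large show ?thesis
    by (meson order_trans)
qed

subsection \<open>Asymptotics\<close>

lemma powr_log_plus_log_log:
  fixes q x a :: real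
  assumes "q > 1" "x > 1"
  shows "q powr (log q x + a * log q (log q x)) = x * log q x powr a"
proof -
  have "log q x > 0"
    using assms by simp
  have "q powr (a * log q (log q x)) = (q powr log q (log q x)) powr a"
    by (simp add: powr_powr mult.commute)
  also have "\<dots> = log q x powr a"
    using assms(1) \<open>log q x > 0\<close> by simp
  finally have "q powr (a * log q (log q x)) = log q x powr a" .
  then show ?thesis
    using assms by (simp add: powr_add)
qed

lemma block_code_bound_le:
  assumes q: "q \<ge> 2" and "l \<ge> 1" "2 * l \<le> n" and "s > 0" and ql: "real q ^ l \<le> real n / s"
  shows "block_code_bound q n l \<le> 1 / (real l + 1) + exp (- (s / 2))"
proof -
  have "n > 0"
    using assms by simp
  have "n \<le> n div l * l + l"
    using mod_less_divisor[of l n] \<open>l \<ge> 1\<close> div_mult_mod_eq[of n l] by linarith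
  then have "real n \<le> real (n div l) * real l + real l"
    by (metis of_nat_add of_nat_le_iff of_nat_mult)
  moreover have "2 * real l \<le> real n"
    using \<open>2 * l \<le> n\<close> by simp
  ultimately have half: "real n / 2 \<le> (real l + 1) * real (n div l)"
    by (simp add: algebra_simps)
  have "s / 2 = (real n / 2) / (real n / s)"
    using \<open>n > 0\<close> \<open>s > 0\<close> by simp
  also have "\<dots> \<le> (real l + 1) * real (n div l) / (real n / s)"
    using half \<open>n > 0\<close> \<open>s > 0\<close> by (intro divide_right_mono) auto
  also have "\<dots> \<le> (real l + 1) * real (n div l) / real q ^ l"
    using ql q \<open>n > 0\<close> \<open>s > 0\<close> by (intro divide_left_mono) auto
  finally show ?thesis
    unfolding block_code_bound_def by simp
qed

lemma le_r_star_log_log: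
  fixes q n :: nat
  defines "L \<equiv> log q (real n)" and "y \<equiv> log q (real n) - 2 * log q (log q (real n))"
  assumes q: "q \<ge> 2" and "1 < L" "1 \<le> y" "2 * y \<le> real n"
  shows "log q L - log q (L / y + L * exp (- (L ^ 2 / 2))) \<le> r_star q n"
proof -
  define l where "l = nat \<lfloor>y\<rfloor>"
  have l: "1 \<le> l" "real l \<le> y" "y < real l + 1"
    using \<open>1 \<le> y\<close> by (simp_all add: l_def) linarith+
  have "n > 1"
    using \<open>1 < L\<close> q by (cases "n = 0") (auto simp: L_def less_log_iff log_def)
  have "real q ^ l = real q powr real l"
    using q by (simp add: powr_realpow)
  also have "\<dots> \<le> real q powr y"
    using q l by (intro powr_mono) auto
  also have "\<dots> = real n / L ^ 2"
    using powr_log_plus_log_log[of q n "-2"] q \<open>n > 1\<close> \<open>1 < L\<close>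
    by (simp add: y_def L_def powr_minus divide_inverse)
  finally have "block_code_bound q n l \<le> 1 / (real l + 1) + exp (- (L ^ 2 / 2))"
    using block_code_bound_le[OF q \<open>1 \<le> l\<close>] l assms(4-6) by simp
  also have "\<dots> \<le> 1 / y + exp (- (L ^ 2 / 2))"
    using l \<open>1 \<le> y\<close> by (simp add: frac_le)
  finally have "L * block_code_bound q n l \<le> L * (1 / y + exp (- (L ^ 2 / 2)))"
    using \<open>1 < L\<close> by (intro mult_left_mono) auto
  then have L_bound: "L * block_code_bound q n l \<le> L / y + L * exp (- (L ^ 2 / 2))"
    by (simp add: distrib_left)
  have pos: "block_code_bound q n l > 0"
    unfolding block_code_bound_def by (intro add_pos_pos) auto
  have "log q L + log q (block_code_bound q n l) = log q (L * block_code_bound q n l)"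
    using q \<open>1 < L\<close> pos by (simp add: log_mult)
  also have "\<dots> \<le> log q (L / y + L * exp (- (L ^ 2 / 2)))"
    using q \<open>1 < L\<close> pos L_bound by (intro log_mono) auto
  finally have "log q L + log q (block_code_bound q n l) \<le> log q (L / y + L * exp (- (L ^ 2 / 2)))" .
  moreover have "- log q (block_code_bound q n l) \<le> r_star q n"
    using le_r_star_if_card_le[OF q pos] card_two_read_code_le[OF q] by blast
  ultimately show ?thesis
    by simp
qed

lemma r_star_lower_asymptotic:
  assumes q: "q \<ge> 2"
  shows "\<exists>f. f \<longlonglongrightarrow> 0 \<and> (\<forall>\<^sub>F n in sequentially. log q (log q n) - f n \<le> r_star q n)"
proof -
  have c: "ln (real q) > 0"
    using q by simp
  define L where "L n = log q (real n)" for n :: nat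
  define y where "y n = L n - 2 * log q (L n)" for n
  define f where "f n = log q (L n / y n + L n * exp (- (L n ^ 2 / 2)))" for n
  have "f \<longlonglongrightarrow> 0"
    unfolding f_def y_def L_def log_def using c by real_asymp
  have "\<forall>\<^sub>F n in sequentially. 1 < L n"
    unfolding L_def log_def using c by real_asymp
  moreover have "\<forall>\<^sub>F n in sequentially. 1 \<le> y n"
    unfolding y_def L_def log_def using c by real_asymp
  moreover have "\<forall>\<^sub>F n in sequentially. 2 * y n \<le> real n"
    unfolding y_def L_def log_def using c by real_asymp
  ultimately have "\<forall>\<^sub>F n in sequentially. log q (log q n) - f n \<le> r_star q n"
    by eventually_elim (use le_r_star_log_log[OF q] in \<open>simp add: f_def y_def L_def\<close>)
  with \<open>f \<longlonglongrightarrow> 0\<close> show ?thesis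
    by blast
qed

lemma coprime_fact_multiple_plus_one:
  assumes "1 \<le> d" "d < q"
  shows "coprime (k * fact (q - 1) + 1) (d :: nat)"
proof (rule coprimeI)
  fix c assume c: "c dvd k * fact (q - 1) + 1" "c dvd d"
  have "d dvd fact (q - 1)"
    using assms by (intro dvd_fact) auto
  then have "c dvd k * fact (q - 1)"
    using c(2) by (meson dvd_trans dvd_mult)
  then have "c dvd 1"
    using c(1) by (simp only: dvd_add_right_iff)
  then show "is_unit c"
    by simp
qed

lemma exists_coprime_to_digits:
  fixes z :: real
  assumes "z \<ge> 0"
  shows "\<exists>P :: nat. z \<le> real P \<and> real P \<le> z + fact (q - 1) + 1 \<and> (\<forall>d. 1 \<le> d \<longrightarrow> d < q \<longrightarrow> coprime P d)"
proof -
  define F :: real where "F = fact (q - 1)"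
  define k where "k = nat \<lceil>z / F\<rceil>"
  have "F \<ge> 1"
    by (simp add: F_def)
  have "z / F \<le> real k" "real k \<le> z / F + 1"
    using \<open>z \<ge> 0\<close> \<open>F \<ge> 1\<close> by (simp_all add: k_def real_nat_ceiling_ge)
  then have "z \<le> real k * F" "real k * F \<le> z + F"
    using \<open>F \<ge> 1\<close> by (simp_all add: field_simps)
  then show ?thesis
    using coprime_fact_multiple_plus_one[of _ q k]
    by (intro exI[of _ "k * fact (q - 1) + 1"]) (simp add: F_def)
qed

lemma r_star_le_checksum_code_bound:
  assumes q: "q \<ge> 2" and "P \<ge> 1" and coprime: "\<And>d. 1 \<le> d \<Longrightarrow> d < q \<Longrightarrow> coprime P d"
    and "2 * P \<le> n + 2" and small: "real n * real q ^ 2 / real q ^ (2 * P) < 1"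
  shows "r_star q n \<le> 1 + log q P - log q (1 - real n * real q ^ 2 / real q ^ (2 * P))"
proof -
  define \<epsilon> where "\<epsilon> = real n * real q ^ 2 / real q ^ (2 * P)"
  obtain r1 r2 where large: "real q ^ n - real n * real q ^ (n + 2 - 2 * P) \<le>
      real q * real P * real (card (checksum_code q P n r1 r2))"
    using exists_large_checksum_code[OF q \<open>P \<ge> 1\<close>] by blast
  have "real q ^ (n + 2 - 2 * P) * real q ^ (2 * P) = real q ^ n * real q ^ 2"
    using \<open>2 * P \<le> n + 2\<close> by (simp add: power_add[symmetric])
  then have "real n * real q ^ (n + 2 - 2 * P) = real q ^ n * \<epsilon>"
    using q by (simp add: \<epsilon>_def field_simps)
  with large have "real q ^ n * ((1 - \<epsilon>) / (real q * real P)) \<le> real (card (checksum_code q P n r1 r2))"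
    using q \<open>P \<ge> 1\<close> by (simp add: field_simps)
  moreover have "(1 - \<epsilon>) / (real q * real P) > 0"
    using small q \<open>P \<ge> 1\<close> by (simp add: \<epsilon>_def)
  ultimately have "r_star q n \<le> - log q ((1 - \<epsilon>) / (real q * real P))"
    using r_star_le_if_card_ge[OF q two_read_code_checksum_code[OF q coprime]] by blast
  also have "\<dots> = 1 + log q P - log q (1 - \<epsilon>)"
    using q \<open>P \<ge> 1\<close> small by (simp add: \<epsilon>_def log_divide log_mult)
  finally show ?thesis
    by (simp add: \<epsilon>_def)
qed

lemma r_star_le_log_log:
  fixes q n :: nat
  defines "L \<equiv> log q (real n)" and "K \<equiv> (2 * fact (q - 1) + 2 :: real)"
  assumes q: "q \<ge> 2" and "1 < L" and "real q ^ 2 / L ^ 2 < 1" and "L + 2 * log q L + K \<le> real n"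
  shows "r_star q n \<le>
    log q L + 1 - log q 2 + (log q ((L + 2 * log q L + K) / L) - log q (1 - real q ^ 2 / L ^ 2))"
proof -
  have "n > 1"
    using \<open>1 < L\<close> q by (cases "n = 0") (auto simp: L_def less_log_iff log_def)
  have "0 < log q L"
    using \<open>1 < L\<close> q by simp
  then obtain P :: nat where P: "L / 2 + log q L \<le> real P" "real P \<le> L / 2 + log q L + fact (q - 1) + 1"
    and coprime: "\<And>d. 1 \<le> d \<Longrightarrow> d < q \<Longrightarrow> coprime P d"
    using exists_coprime_to_digits[of "L / 2 + log q L" q] \<open>1 < L\<close> by auto
  then have P_bounds: "L + 2 * log q L \<le> 2 * real P" "2 * real P \<le> L + 2 * log q L + K"
    by (simp_all add: K_def)
  have "real n * L ^ 2 = real q powr (L + 2 * log q L)"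
    using powr_log_plus_log_log[of q n 2] q \<open>n > 1\<close> \<open>1 < L\<close> by (simp add: L_def)
  also have "\<dots> \<le> real q powr real (2 * P)"
    using q P_bounds by (intro powr_mono) auto
  also have "\<dots> = real q ^ (2 * P)"
    using q powr_realpow[of "real q" "2 * P"] by simp
  finally have eps_le: "real n * real q ^ 2 / real q ^ (2 * P) \<le> real q ^ 2 / L ^ 2"
    using \<open>1 < L\<close> \<open>n > 1\<close> q by (simp add: field_simps)
  then have eps_less: "real n * real q ^ 2 / real q ^ (2 * P) < 1"
    using assms(5) by linarith
  have eps_log: "log q (1 - real q ^ 2 / L ^ 2) \<le> log q (1 - real n * real q ^ 2 / real q ^ (2 * P))"
    using eps_le assms(5) q by (intro log_mono) auto
  have "0 < real P" "real (2 * P) \<le> real (n + 2)"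
    using P_bounds \<open>0 < log q L\<close> \<open>1 < L\<close> assms(6) by linarith+
  then have "P \<ge> 1" "2 * P \<le> n + 2"
    by simp_all
  have "log q (real P) = log q L - log q 2 + log q (2 * real P / L)"
    using q \<open>1 < L\<close> \<open>P \<ge> 1\<close> by (simp add: log_divide log_mult)
  also have "\<dots> \<le> log q L - log q 2 + log q ((L + 2 * log q L + K) / L)"
    using q \<open>1 < L\<close> \<open>P \<ge> 1\<close> P_bounds by (simp add: log_le_cancel_iff divide_right_mono)
  finally show ?thesis
    using r_star_le_checksum_code_bound[OF q \<open>P \<ge> 1\<close> coprime \<open>2 * P \<le> n + 2\<close> eps_less] eps_log
    by simp
qed

lemma r_star_upper_asymptotic:
  assumes q: "q \<ge> 2"
  shows "\<exists>g. g \<longlonglongrightarrow> 0 \<and> (\<forall>\<^sub>F n in sequentially. r_star q n \<le> log q (log q n) + 1 - log q 2 + g n)"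
proof -
  have c: "ln (real q) > 0"
    using q by simp
  define L where "L n = log q (real n)" for n :: nat
  define K :: real where "K = 2 * fact (q - 1) + 2"
  define g where "g n = log q ((L n + 2 * log q (L n) + K) / L n) - log q (1 - real q ^ 2 / L n ^ 2)" for n
  have "g \<longlonglongrightarrow> 0"
    unfolding g_def L_def log_def using c by real_asymp
  have "\<forall>\<^sub>F n in sequentially. 1 < L n"
    unfolding L_def log_def using c by real_asymp
  moreover have "\<forall>\<^sub>F n in sequentially. real q ^ 2 / L n ^ 2 < 1"
    unfolding L_def log_def using c by real_asymp
  moreover have "\<forall>\<^sub>F n in sequentially. L n + 2 * log q (L n) + K \<le> real n"
    unfolding L_def log_def using c by real_asymp
  ultimately have "\<forall>\<^sub>F n in sequentially. r_star q n \<le> log q (log q n) + 1 - log q 2 + g n"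
    by eventually_elim (use r_star_le_log_log[OF q] in \<open>simp add: g_def L_def K_def\<close>)
  with \<open>g \<longlonglongrightarrow> 0\<close> show ?thesis
    by blast
qed

theorem corollary3:
  fixes q :: nat
  assumes "q \<ge> 2"
  shows "\<exists>f g :: nat \<Rightarrow> real. f \<longlonglongrightarrow> 0 \<and> g \<longlonglongrightarrow> 0 \<and>
    (\<forall>\<^sub>F n in sequentially.
       log q (log q n) - f n \<le> r_star q n \<and>
       r_star q n \<le> log q (log q n) + 1 - log q 2 + g n)"
proof -
  obtain f where "f \<longlonglongrightarrow> 0" and lower: "\<forall>\<^sub>F n in sequentially. log q (log q n) - f n \<le> r_star q n"
    using r_star_lower_asymptotic[OF assms] by blast
  obtain g where "g \<longlonglongrightarrow> 0"
    and upper: "\<forall>\<^sub>F n in sequentially. r_star q n \<le> log q (log q n) + 1 - log q 2 + g n"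
    using r_star_upper_asymptotic[OF assms] by blast
  show ?thesis
    using \<open>f \<longlonglongrightarrow> 0\<close> \<open>g \<longlonglongrightarrow> 0\<close> eventually_conj[OF lower upper] by blast
qed

end
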